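(* Let $R,r>0$, $q_1=\frac1{2r}+\frac1{2R}$, and let $K^{-1/2}_0$ and $\{\mathbb{E}(t)\}$ be as in the context (touching disks). For $f,g\in K^{-1/2}_0$ write $PUf=(\hat f_1,\hat f_2)^T$, $PUg=(\hat g_1,\hat g_2)^T$. Then $$d\langle f,\mathbb{E}(t)g\rangle_{-1/2}=\begin{cases}\dfrac{1-2t}{2|t\ln(2|t|)|}\Big[\hat f_2\big(\tfrac{\ln(2|t|)}{q_1}\big)\overline{\hat g_2\big(\tfrac{\ln(2|t|)}{q_1}\big)}+\hat f_2\big(-\tfrac{\ln(2|t|)}{q_1}\big)\overline{\hat g_2\big(-\tfrac{\ln(2|t|)}{q_1}\big)}\Big]dt,& t\in[-1/2,0),\\[8pt]\dfrac{1-2t}{2|t\ln(2|t|)|}\Big[\hat f_1\big(\tfrac{\ln(2|t|)}{q_1}\big)\overline{\hat g_1\big(\tfrac{\ln(2|t|)}{q_1}\big)}+\hat f_1\big(-\tfrac{\ln(2|t|)}{q_1}\big)\overline{\hat g_1\big(-\tfrac{\ln(2|t|)}{q_1}\big)}\Big]dt,& t\in(0,1/2].\end{cases}$$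
   Context: Identify $\mathbb{R}^2$ with $\mathbb{C}$; for $a\in\mathbb{R}\setminus\{0\}$ let $B_a$ be the open disk of radius $|a|$ centered at $(a,0)$. Fix $R,r>0$, $\Omega=B_R\cup B_{-r}$, $q_1=\frac1{2r}+\frac1{2R}$. For $k\neq0$ let $\mathbb{S}(k)=\frac{1}{2|k|}\mathrm{diag}(1-e^{-|k|q_1},\,1+e^{-|k|q_1})$. $K^{-1/2}_0$ is the Hilbert space of densities $\varphi$ on $\partial\Omega$ represented by pairs $PU\varphi=(\hat\varphi_1,\hat\varphi_2)^T$ of measurable complex functions on $\mathbb{R}$ (mod a.e.) with $\int_{\mathbb{R}}\hat\varphi^T\mathbb{S}\overline{\hat\varphi}\,dk<\infty$, inner product $\langle\psi,\varphi\rangle_{-1/2}=\int_{\mathbb{R}}(PU\psi)^T\mathbb{S}\,\overline{PU\varphi}\,dk$ (here $P=\frac1{\sqrt2}\begin{bmatrix}-1&1\\1&1\end{bmatrix}$ and $U$ is the Fourier transform of the density pulled back by $z\mapsto1/z$; only the pair $PU\varphi$ matters). For $s\in\mathbb{R}\cup\{\infty\}$ let $\mathcal{P}^1(s)$, $\mathcal{P}^2(s)$ be the orthogonal projections with $PU(\mathcal{P}^1(s)\varphi)=(\chi_{(-\infty,s]}\hat\varphi_1,0)$, $PU(\mathcal{P}^2(s)\varphi)=(0,\chi_{(-\infty,s]}\hat\varphi_2)$ (with $\chi_{(-\infty,\infty]}\equiv1$), $\mathbb{I}=\mathcal{P}^1(\infty)+\mathcal{P}^2(\infty)$, and $$\mathbb{E}(t)=\begin{cases}\mathcal{P}^2\!\left(-\frac{\ln(-2t)}{q_1}\right)-\mathcal{P}^2\!\left(\frac{\ln(-2t)}{q_1}\right),&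 t\in[-1/2,0),\\[2pt]\mathcal{P}^1\!\left(\frac{\ln(2t)}{q_1}\right)-\mathcal{P}^1\!\left(-\frac{\ln(2t)}{q_1}\right)+\mathbb{I},& t\in(0,1/2],\end{cases}\qquad\mathbb{E}(0)=\lim_{t\to0^+}\mathbb{E}(t).$$ The claimed identity is an identity of measures in $t$ on $[-1/2,1/2]$ (densities holding for a.e. $t$). *)

theory Defs
  imports "HOL-Analysis.Analysis"
begin

text \<open>A density in K^{-1/2}_0 is represented by the pair PU phi = (phi1, phi2)
  of complex functions on the real line.\<close>
type_synonym dpair = "(real \<Rightarrow> complex) \<times> (real \<Rightarrow> complex)"

definition q1 :: "real \<Rightarrow> real \<Rightarrow> real" where
  "q1 R r = 1 / (2 * r) + 1 / (2 * R)"

definition S1 :: "real \<Rightarrow> real \<Rightarrow> real" where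
  "S1 q k = (1 - exp (- \<bar>k\<bar> * q)) / (2 * \<bar>k\<bar>)"

definition S2 :: "real \<Rightarrow> real \<Rightarrow> real" where
  "S2 q k = (1 + exp (- \<bar>k\<bar> * q)) / (2 * \<bar>k\<bar>)"

definition inK :: "real \<Rightarrow> dpair \<Rightarrow> bool" where
  "inK q \<phi> \<longleftrightarrow> fst \<phi> \<in> borel_measurable lborel \<and> snd \<phi> \<in> borel_measurable lborel \<and>
     integrable lborel (\<lambda>k. S1 q k * (cmod (fst \<phi> k))\<^sup>2) \<and>
     integrable lborel (\<lambda>k. S2 q k * (cmod (snd \<phi> k))\<^sup>2)"

definition ipK :: "real \<Rightarrow> dpair \<Rightarrow> dpair \<Rightarrow> complex" where
  "ipK q \<psi> \<phi> = (LINT k|lborel. complex_of_real (S1 q k) * fst \<psi> k * cnj (fst \<phi> k)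
                                 + complex_of_real (S2 q k) * snd \<psi> k * cnj (snd \<phi> k))"

definition Proj1 :: "ereal \<Rightarrow> dpair \<Rightarrow> dpair" where
  "Proj1 s \<phi> = ((\<lambda>k. if ereal k \<le> s then fst \<phi> k else 0), (\<lambda>k. 0))"

definition Proj2 :: "ereal \<Rightarrow> dpair \<Rightarrow> dpair" where
  "Proj2 s \<phi> = ((\<lambda>k. 0), (\<lambda>k. if ereal k \<le> s then snd \<phi> k else 0))"

definition Ident :: "dpair \<Rightarrow> dpair" where
  "Ident \<phi> = \<phi>"

definition padd :: "dpair \<Rightarrow> dpair \<Rightarrow> dpair" where
  "padd a b = ((\<lambda>k. fst a k + fst b k), (\<lambda>k. snd a k + snd b k))"

definition psub :: "dpair \<Rightarrow> dpair \<Rightarrow> dpair" where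
  "psub a b = ((\<lambda>k. fst a k - fst b k), (\<lambda>k. snd a k - snd b k))"

text \<open>The resolution of identity E(t). At t = 0 we use the limit t -> 0+,
  i.e. P^1(-\<infinity>) - P^1(\<infinity>) + I = I - P^1(\<infinity>).\<close>
definition Eres :: "real \<Rightarrow> real \<Rightarrow> dpair \<Rightarrow> dpair" where
  "Eres q t \<phi> =
     (if t < 0 then psub (Proj2 (ereal (- ln (- 2 * t) / q)) \<phi>) (Proj2 (ereal (ln (- 2 * t) / q)) \<phi>)
      else if 0 < t then padd (psub (Proj1 (ereal (ln (2 * t) / q)) \<phi>) (Proj1 (ereal (- ln (2 * t) / q)) \<phi>)) (Ident \<phi>)
      else psub (Ident \<phi>) (Proj1 \<infinity> \<phi>))"

definition Edens :: "real \<Rightarrow> dpair \<Rightarrow> dpair \<Rightarrow> real \<Rightarrow> complex" where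
  "Edens q f g t =
     (let a = ln (2 * \<bar>t\<bar>) / q;
          c = complex_of_real ((1 - 2 * t) / (2 * \<bar>t * ln (2 * \<bar>t\<bar>)\<bar>))
      in if t < 0 then c * (snd f a * cnj (snd g a) + snd f (- a) * cnj (snd g (- a)))
         else if 0 < t then c * (fst f a * cnj (fst g a) + fst f (- a) * cnj (fst g (- a)))
         else 0)"

end

theory Submission
  imports Defs
begin

(* In the representation PU, E(t) multiplies the pair by indicator functions of k-sets bounded
   by \<plusminus>ln(2|t|)/q1 (acting on the second component for t < 0, on the first for t > 0), so
   <f, E(t) g> is the integral of S(k) f(k) cnj(g(k)) over a k-set that grows with t.  The
   substitution k = \<plusminus>ln(2|t|)/q1, dk = dt/(q1 |t|), turns it into an integral in t.  On both
   branches exp(-|k| q1) = 2|t|, so the diagonal entries of S(k) become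
   q1 (1 \<mp> 2|t|) / (2 |ln(2|t|)|), and the factor (1 - 2t)/(2|t ln(2|t|)|) appears. *)

lemma borel_measurable_cnj [measurable]: "cnj \<in> borel_measurable borel"
  by (intro borel_measurable_continuous_onI continuous_intros)

lemma integrable_weighted_mult_cnj:
  fixes a b :: "'a \<Rightarrow> complex"
  assumes w: "\<And>x. 0 \<le> w x" "w \<in> borel_measurable M"
    and a: "a \<in> borel_measurable M" "integrable M (\<lambda>x. w x * (cmod (a x))\<^sup>2)"
    and b: "b \<in> borel_measurable M" "integrable M (\<lambda>x. w x * (cmod (b x))\<^sup>2)"
  shows "integrable M (\<lambda>x. of_real (w x) * a x * cnj (b x))"
proof (rule Bochner_Integration.integrable_bound)
  show "integrable M (\<lambda>x. w x * (cmod (a x))\<^sup>2 + w x * (cmod (b x))\<^sup>2)"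
    using a(2) b(2) by (rule Bochner_Integration.integrable_add)
  show "(\<lambda>x. of_real (w x) * a x * cnj (b x)) \<in> borel_measurable M"
    using w(2) a(1) b(1) by measurable
  show "AE x in M. norm (of_real (w x) * a x * cnj (b x))
                     \<le> norm (w x * (cmod (a x))\<^sup>2 + w x * (cmod (b x))\<^sup>2)"
  proof (rule AE_I2)
    fix x
    have "cmod (a x) * cmod (b x) \<le> (cmod (a x))\<^sup>2 + (cmod (b x))\<^sup>2"
      using sum_squares_bound[of "cmod (a x)" "cmod (b x)"]
        mult_nonneg_nonneg[OF norm_ge_zero norm_ge_zero, of "a x" "b x"] by linarith
    then have "w x * (cmod (a x) * cmod (b x)) \<le> w x * ((cmod (a x))\<^sup>2 + (cmod (b x))\<^sup>2)"
      using w(1) by (rule mult_left_mono)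
    then show "norm (of_real (w x) * a x * cnj (b x))
                 \<le> norm (w x * (cmod (a x))\<^sup>2 + w x * (cmod (b x))\<^sup>2)"
      using w(1)[of x] by (simp add: norm_mult distrib_left)
  qed
qed

lemma
  fixes f :: "'a::euclidean_space \<Rightarrow> 'b::{banach, second_countable_topology}"
  assumes "set_borel_measurable lborel S f"
  shows set_integrable_lebesgue_iff_lborel:
      "set_integrable lebesgue S f \<longleftrightarrow> set_integrable lborel S f"
    and set_integral_lebesgue_eq_lborel: "(LINT x:S|lebesgue. f x) = (LINT x:S|lborel. f x)"
  using assms integrable_completion[of "\<lambda>x. indicator S x *\<^sub>R f x" lborel]
    integral_completion[of "\<lambda>x. indicator S x *\<^sub>R f x" lborel]
  unfolding set_borel_measurable_def set_integrable_def set_lebesgue_integral_def by auto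

lemma integrable_imp_set_integrable:
  fixes f :: "'a \<Rightarrow> 'b::{banach, second_countable_topology}"
  shows "integrable M f \<Longrightarrow> A \<in> sets M \<Longrightarrow> set_integrable M A f"
  unfolding set_integrable_def by (rule integrable_mult_indicator)

lemma set_integral_change_of_variables_real:
  fixes h :: "real \<Rightarrow> 'a::euclidean_space"
  assumes S: "S \<in> sets lebesgue"
    and g: "\<And>x. x \<in> S \<Longrightarrow> (g has_field_derivative g' x) (at x within S)"
    and inj: "inj_on g S"
    and h: "set_integrable lborel (g ` S) h"
  shows "set_integrable lebesgue S (\<lambda>x. \<bar>g' x\<bar> *\<^sub>R h (g x))"
    and "(LINT x:S|lebesgue. \<bar>g' x\<bar> *\<^sub>R h (g x)) = (LINT y:g ` S|lborel. h y)"
proof -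
  have hm: "set_borel_measurable lborel (g ` S) h"
    using h unfolding set_integrable_def set_borel_measurable_def by auto
  have hl: "set_integrable lebesgue (g ` S) h"
    using h set_integrable_lebesgue_iff_lborel[OF hm] by simp
  from has_absolute_integral_change_of_variables_real[OF S g inj, of h "integral (g ` S) h"] hl
  have cv: "set_integrable lebesgue S (\<lambda>x. \<bar>g' x\<bar> *\<^sub>R h (g x))"
    "integral S (\<lambda>x. \<bar>g' x\<bar> *\<^sub>R h (g x)) = integral (g ` S) h"
    by auto
  show "set_integrable lebesgue S (\<lambda>x. \<bar>g' x\<bar> *\<^sub>R h (g x))"
    by (fact cv(1))
  have "(LINT x:S|lebesgue. \<bar>g' x\<bar> *\<^sub>R h (g x)) = integral (g ` S) h"
    using set_lebesgue_integral_eq_integral(2)[OF cv(1)] cv(2) by simp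
  also have "\<dots> = (LINT y:g ` S|lebesgue. h y)"
    using set_lebesgue_integral_eq_integral(2)[OF hl] by simp
  also have "\<dots> = (LINT y:g ` S|lborel. h y)"
    by (rule set_integral_lebesgue_eq_lborel[OF hm])
  finally show "(LINT x:S|lebesgue. \<bar>g' x\<bar> *\<^sub>R h (g x)) = (LINT y:g ` S|lborel. h y)" .
qed

lemma set_integrable_reflect:
  fixes f :: "real \<Rightarrow> 'a::{banach, second_countable_topology}"
  shows "set_integrable lborel (uminus ` S) f \<longleftrightarrow> set_integrable lborel S (\<lambda>x. f (- x))"
  using lborel_integrable_real_affine_iff[of "-1" "\<lambda>x. indicator (uminus ` S) x *\<^sub>R f x" 0]
  unfolding set_integrable_def by (simp add: indicator_def image_iff)

lemma sets_borel_uminus_image: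
  fixes A :: "real set"
  assumes "A \<in> sets borel"
  shows "uminus ` A \<in> sets borel"
proof -
  have "uminus ` A = {y. - y \<in> A}"
    by (force simp: image_iff)
  moreover have "{y. - y \<in> A} \<in> sets borel"
    using assms by measurable
  ultimately show ?thesis
    by simp
qed

lemma
  fixes f :: "real \<Rightarrow> 'a::{banach, second_countable_topology}"
  assumes "finite X" "\<And>x. x \<notin> X \<Longrightarrow> x \<in> A \<longleftrightarrow> x \<in> B"
  shows set_integrable_cong_finite: "set_integrable lborel A f \<longleftrightarrow> set_integrable lborel B f"
    and set_integral_cong_finite: "(LINT x:A|lborel. f x) = (LINT x:B|lborel. f x)"
  unfolding set_integrable_def set_lebesgue_integral_def
  by (rule integrable_discrete_difference[where X=X] integral_discrete_difference[where X=X],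
      use assms in \<open>auto simp: countable_finite indicator_def\<close>)+

lemma set_integral_Icc_add:
  fixes f :: "real \<Rightarrow> 'a::{banach, second_countable_topology}"
  assumes f: "set_integrable lborel {a..c} f" and "a \<le> b" "b \<le> c"
  shows "(LINT x:{a..b}|lborel. f x) + (LINT x:{b..c}|lborel. f x) = (LINT x:{a..c}|lborel. f x)"
proof -
  have "(LINT x:{a..b}|lborel. f x) = (LINT x:{a..<b}|lborel. f x)"
    by (rule set_integral_cong_finite[of "{b}"]) auto
  also have "\<dots> + (LINT x:{b..c}|lborel. f x) = (LINT x:{a..<b} \<union> {b..c}|lborel. f x)"
    using assms by (intro set_integral_Un[symmetric] set_integrable_subset[OF f]) auto
  also have "{a..<b} \<union> {b..c} = {a..c}"
    using assms by auto
  finally show ?thesis .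
qed

lemma exp_half_le_iff:
  fixes q v y :: real
  assumes "0 < q" "0 < v"
  shows "exp (q * y) / 2 \<le> v \<longleftrightarrow> y \<le> ln (2 * v) / q"
proof -
  have "exp (q * y) / 2 \<le> v \<longleftrightarrow> ln (exp (q * y)) \<le> ln (2 * v)"
    using assms by (subst ln_le_cancel_iff) auto
  also have "\<dots> \<longleftrightarrow> y \<le> ln (2 * v) / q"
    using assms by (simp add: pos_le_divide_eq mult.commute)
  finally show ?thesis .
qed

lemma le_exp_half_iff:
  fixes q u y :: real
  assumes "0 < q" "0 < u"
  shows "u \<le> exp (q * y) / 2 \<longleftrightarrow> ln (2 * u) / q \<le> y"
proof -
  have "u \<le> exp (q * y) / 2 \<longleftrightarrow> ln (2 * u) \<le> ln (exp (q * y))"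
    using assms by (subst ln_le_cancel_iff) auto
  also have "\<dots> \<longleftrightarrow> ln (2 * u) / q \<le> y"
    using assms by (simp add: pos_divide_le_eq mult.commute)
  finally show ?thesis .
qed

lemma exp_preimage_greaterThanAtMost:
  fixes q v :: real
  assumes "0 < q" "0 < v"
  shows "{y. exp (q * y) / 2 \<in> {0<..v}} = {..ln (2 * v) / q}"
  by (rule set_eqI)
     (simp only: mem_Collect_eq greaterThanAtMost_iff atMost_iff exp_half_le_iff[OF assms], simp)

lemma exp_preimage_atLeastAtMost:
  fixes q u v :: real
  assumes "0 < q" "0 < u" "u \<le> v"
  shows "{y. exp (q * y) / 2 \<in> {u..v}} = {ln (2 * u) / q..ln (2 * v) / q}"
  using assms
  by (intro set_eqI)
     (simp only: mem_Collect_eq atLeastAtMost_iff exp_half_le_iff le_exp_half_iff)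

lemma bij_betw_ln_double_div:
  fixes q :: real
  assumes "0 < q" "S \<subseteq> {0<..}"
  shows "bij_betw (\<lambda>x. ln (2 * x) / q) S {y. exp (q * y) / 2 \<in> S}"
  by (rule bij_betw_byWitness[where f'="\<lambda>y. exp (q * y) / 2"]) (use assms in auto)

definition log_density :: "real \<Rightarrow> (real \<Rightarrow> 'a::real_normed_vector) \<Rightarrow> real \<Rightarrow> 'a" where
  "log_density q h x = (1 / (q * \<bar>x\<bar>)) *\<^sub>R (h (ln (2 * \<bar>x\<bar>) / q) + h (- (ln (2 * \<bar>x\<bar>) / q)))"

lemma set_integral_log_density:
  fixes h :: "real \<Rightarrow> 'a::euclidean_space"
  assumes q: "0 < q" and h: "integrable lborel h" and S: "S \<in> sets borel" "S \<subseteq> {0<..}"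
  defines "T \<equiv> {y. exp (q * y) / 2 \<in> S}"
  shows "set_integrable lborel S (log_density q h)"
    and "(LINT x:S|lborel. log_density q h x)
           = (LINT y:T|lborel. h y) + (LINT y:uminus ` T|lborel. h y)"
proof -
  define \<phi> where "\<phi> x = ln (2 * x) / q" for x
  have [measurable]: "h \<in> borel_measurable borel"
    using h by auto
  have "bij_betw \<phi> S T"
    unfolding \<phi>_def T_def using q S(2) by (rule bij_betw_ln_double_div)
  then have inj: "inj_on \<phi> S" "inj_on (\<lambda>x. - \<phi> x) S"
    and img: "\<phi> ` S = T" "(\<lambda>x. - \<phi> x) ` S = uminus ` T"
    by (auto simp: bij_betw_def inj_on_def image_image[symmetric, of uminus \<phi>])
  have deriv: "(\<phi> has_field_derivative 1 / (q * x)) (at x within S)"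
    "((\<lambda>x. - \<phi> x) has_field_derivative - 1 / (q * x)) (at x within S)" if "x \<in> S" for x
    using that S(2) q unfolding \<phi>_def by (auto intro!: derivative_eq_intros simp: field_simps)
  have T_borel: "T \<in> sets borel"
    unfolding T_def using S(1) by measurable
  note h_on = integrable_imp_set_integrable[OF h, unfolded sets_lborel]
  note cv1 = set_integral_change_of_variables_real[OF _ deriv(1) inj(1), unfolded img,
      OF _ _ h_on[OF T_borel]]
   and cv2 = set_integral_change_of_variables_real[OF _ deriv(2) inj(2), unfolded img,
      OF _ _ h_on[OF sets_borel_uminus_image[OF T_borel]]]
  have eq: "log_density q h x = \<bar>1 / (q * x)\<bar> *\<^sub>R h (\<phi> x) + \<bar>- 1 / (q * x)\<bar> *\<^sub>R h (- \<phi> x)"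
    if "x \<in> S" for x
    using that S(2) q by (auto simp: log_density_def \<phi>_def scaleR_add_right)
  have meas: "set_borel_measurable lborel S (log_density q h)"
    unfolding set_borel_measurable_def log_density_def using S(1) by measurable
  have "set_integrable lebesgue S (log_density q h)"
    using set_integral_add(1)[OF cv1(1) cv2(1)] S(1)
    by (subst set_integrable_cong[OF refl refl eq]) auto
  then show "set_integrable lborel S (log_density q h)"
    using set_integrable_lebesgue_iff_lborel[OF meas] by simp
  have "(LINT x:S|lebesgue. log_density q h x)
      = (LINT x:S|lebesgue. \<bar>1 / (q * x)\<bar> *\<^sub>R h (\<phi> x) + \<bar>- 1 / (q * x)\<bar> *\<^sub>R h (- \<phi> x))"
    using S(1) eq by (intro set_lebesgue_integral_cong) auto
  also have "\<dots> = (LINT y:T|lborel. h y) + (LINT y:uminus ` T|lborel. h y)"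
    using set_integral_add(2)[OF cv1(1) cv2(1)] cv1(2) cv2(2) S(1) by simp
  finally show "(LINT x:S|lborel. log_density q h x)
      = (LINT y:T|lborel. h y) + (LINT y:uminus ` T|lborel. h y)"
    using set_integral_lebesgue_eq_lborel[OF meas] by simp
qed

lemma S1_nonneg: "0 < q \<Longrightarrow> 0 \<le> S1 q k"
  by (auto simp: S1_def intro!: divide_nonneg_nonneg)

lemma S2_nonneg: "0 \<le> S2 q k"
  by (auto simp: S2_def intro!: divide_nonneg_nonneg add_nonneg_nonneg)

lemma borel_measurable_S1 [measurable]: "S1 q \<in> borel_measurable borel"
  unfolding S1_def by measurable

lemma borel_measurable_S2 [measurable]: "S2 q \<in> borel_measurable borel"
  unfolding S2_def by measurable

lemma S1_uminus [simp]: "S1 q (- k) = S1 q k"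
  by (simp add: S1_def)

lemma S2_uminus [simp]: "S2 q (- k) = S2 q k"
  by (simp add: S2_def)

lemma
  assumes "0 < q" "0 < x" "x \<le> 1/2"
  shows S1_ln: "S1 q (ln (2 * x) / q) = q * (1 - 2 * x) / (2 * \<bar>ln (2 * x)\<bar>)"
    and S2_ln: "S2 q (ln (2 * x) / q) = q * (1 + 2 * x) / (2 * \<bar>ln (2 * x)\<bar>)"
proof -
  have "ln (2 * x) \<le> 0"
    using assms by simp
  then have "exp (- \<bar>ln (2 * x) / q\<bar> * q) = 2 * x" and "\<bar>ln (2 * x) / q\<bar> = \<bar>ln (2 * x)\<bar> / q"
    using assms by (simp_all add: abs_div)
  then show "S1 q (ln (2 * x) / q) = q * (1 - 2 * x) / (2 * \<bar>ln (2 * x)\<bar>)"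
    and "S2 q (ln (2 * x) / q) = q * (1 + 2 * x) / (2 * \<bar>ln (2 * x)\<bar>)"
    using assms by (simp_all add: S1_def S2_def)
qed

definition ipK_dens1 :: "real \<Rightarrow> dpair \<Rightarrow> dpair \<Rightarrow> real \<Rightarrow> complex" where
  "ipK_dens1 q f g k = of_real (S1 q k) * fst f k * cnj (fst g k)"

definition ipK_dens2 :: "real \<Rightarrow> dpair \<Rightarrow> dpair \<Rightarrow> real \<Rightarrow> complex" where
  "ipK_dens2 q f g k = of_real (S2 q k) * snd f k * cnj (snd g k)"

lemma integrable_ipK_dens:
  assumes "0 < q" "inK q f" "inK q g"
  shows "integrable lborel (ipK_dens1 q f g)" and "integrable lborel (ipK_dens2 q f g)"
  using assms unfolding ipK_dens1_def ipK_dens2_def inK_def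
  by (auto intro!: integrable_weighted_mult_cnj S1_nonneg S2_nonneg)

(* At x = 1/2 both sides vanish only because ln 1 = 0 and division by zero yields 0. *)
lemma
  assumes "0 < q" "0 < x" "x \<le> 1/2"
  shows Edens_eq_log_density_pos: "Edens q f g x = log_density q (ipK_dens1 q f g) x"
    and Edens_eq_log_density_neg: "Edens q f g (- x) = log_density q (ipK_dens2 q f g) x"
proof -
  have "(1 - 2 * x) / (2 * \<bar>x * ln (2 * x)\<bar>) = 1 / (q * x) * S1 q (ln (2 * x) / q)"
    and "(1 + 2 * x) / (2 * \<bar>x * ln (2 * x)\<bar>) = 1 / (q * x) * S2 q (ln (2 * x) / q)"
    using assms by (simp_all add: S1_ln S2_ln abs_mult)
  then show "Edens q f g x = log_density q (ipK_dens1 q f g) x"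
    and "Edens q f g (- x) = log_density q (ipK_dens2 q f g) x"
    using assms
    by (simp_all add: Edens_def log_density_def ipK_dens1_def ipK_dens2_def Let_def
        scaleR_conv_of_real algebra_simps)
qed

lemma set_integral_Edens_pos:
  assumes q: "0 < q" and f: "inK q f" and g: "inK q g"
    and S: "S \<in> sets borel" "S \<subseteq> {0<..1/2}"
  defines "T \<equiv> {y. exp (q * y) / 2 \<in> S}"
  shows "set_integrable lborel S (Edens q f g)"
    and "(LINT x:S|lborel. Edens q f g x)
           = (LINT y:T|lborel. ipK_dens1 q f g y) + (LINT y:uminus ` T|lborel. ipK_dens1 q f g y)"
proof -
  have "S \<subseteq> {0<..}"
    using S(2) by auto
  note log = set_integral_log_density[OF q integrable_ipK_dens(1)[OF q f g] S(1) this]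
  have eq: "Edens q f g x = log_density q (ipK_dens1 q f g) x" if "x \<in> S" for x
    by (rule Edens_eq_log_density_pos) (use that S(2) q in auto)
  show "set_integrable lborel S (Edens q f g)"
    using log(1) by (subst set_integrable_cong[OF refl refl eq]) auto
  show "(LINT x:S|lborel. Edens q f g x)
           = (LINT y:T|lborel. ipK_dens1 q f g y) + (LINT y:uminus ` T|lborel. ipK_dens1 q f g y)"
    using log(2) S(1) eq unfolding T_def by (subst set_lebesgue_integral_cong) auto
qed

lemma set_integral_Edens_neg:
  assumes q: "0 < q" and f: "inK q f" and g: "inK q g"
    and S: "S \<in> sets borel" "S \<subseteq> {0<..1/2}"
  defines "T \<equiv> {y. exp (q * y) / 2 \<in> S}"
  shows "set_integrable lborel (uminus ` S) (Edens q f g)"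
    and "(LINT x:uminus ` S|lborel. Edens q f g x)
           = (LINT y:T|lborel. ipK_dens2 q f g y) + (LINT y:uminus ` T|lborel. ipK_dens2 q f g y)"
proof -
  have "S \<subseteq> {0<..}"
    using S(2) by auto
  note log = set_integral_log_density[OF q integrable_ipK_dens(2)[OF q f g] S(1) this]
  have eq: "Edens q f g (- x) = log_density q (ipK_dens2 q f g) x" if "x \<in> S" for x
    by (rule Edens_eq_log_density_neg) (use that S(2) q in auto)
  show "set_integrable lborel (uminus ` S) (Edens q f g)"
    unfolding set_integrable_reflect
    using log(1) by (subst set_integrable_cong[OF refl refl eq]) auto
  have "{x. - x \<in> uminus ` S} = S"
    by force
  then show "(LINT x:uminus ` S|lborel. Edens q f g x)
           = (LINT y:T|lborel. ipK_dens2 q f g y) + (LINT y:uminus ` T|lborel. ipK_dens2 q f g y)"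
    using log(2) S(1) eq unfolding T_def set_integral_reflect[of "uminus ` S"]
    by (subst set_lebesgue_integral_cong) auto
qed

lemma set_integrable_Edens:
  assumes q: "0 < q" and f: "inK q f" and g: "inK q g"
  shows "set_integrable lborel {- 1/2..1/2} (Edens q f g)"
proof -
  have S: "{0<..1/2::real} \<in> sets borel" "{0<..1/2} \<subseteq> {0<..1/2::real}"
    by auto
  have "set_integrable lborel (uminus ` {0<..1/2} \<union> {0<..1/2}) (Edens q f g)"
    using set_integral_Edens_neg(1)[OF q f g S] set_integral_Edens_pos(1)[OF q f g S]
    by (rule set_integrable_Un) auto
  then show ?thesis
    by (subst set_integrable_cong_finite[of "{0}"]) auto
qed

lemma ipK_Eres_neg:
  assumes "0 < q" "- 1/2 \<le> t" "t < 0"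
  shows "ipK q f (Eres q t g)
           = (LINT k:{ln (- 2 * t) / q<..- (ln (- 2 * t) / q)}|lborel. ipK_dens2 q f g k)"
proof -
  have "ln (- 2 * t) / q \<le> 0"
    using assms by (auto intro!: divide_nonpos_pos)
  then show ?thesis
    using assms unfolding ipK_def Eres_def psub_def Proj2_def set_lebesgue_integral_def
    by (intro Bochner_Integration.integral_cong) (auto simp: ipK_dens2_def indicator_def)
qed

lemma ipK_Eres_zero: "ipK q f (Eres q 0 g) = integral\<^sup>L lborel (ipK_dens2 q f g)"
  unfolding ipK_def Eres_def psub_def Proj1_def Ident_def ipK_dens2_def
  by (intro Bochner_Integration.integral_cong) auto

lemma ipK_Eres_pos:
  assumes q: "0 < q" and f: "inK q f" and g: "inK q g" and t: "0 < t" "t \<le> 1/2"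
  defines "a \<equiv> ln (2 * t) / q"
  shows "ipK q f (Eres q t g) = (LINT k:{..a}|lborel. ipK_dens1 q f g k)
           + (LINT k:{- a<..}|lborel. ipK_dens1 q f g k) + integral\<^sup>L lborel (ipK_dens2 q f g)"
proof -
  have "a \<le> 0"
    unfolding a_def using q t by (auto intro!: divide_nonpos_pos)
  note int = integrable_ipK_dens[OF q f g]
  have "ipK q f (Eres q t g) = (LINT k|lborel. indicator {..a} k *\<^sub>R ipK_dens1 q f g k
           + indicator {- a<..} k *\<^sub>R ipK_dens1 q f g k + ipK_dens2 q f g k)"
    unfolding ipK_def Eres_def psub_def padd_def Proj1_def Ident_def using t \<open>a \<le> 0\<close>
    by (intro Bochner_Integration.integral_cong)
       (auto simp: ipK_dens1_def ipK_dens2_def indicator_def a_def algebra_simps)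
  then show ?thesis
    using int integrable_imp_set_integrable[OF int(1)]
    unfolding set_integrable_def set_lebesgue_integral_def by simp
qed

lemma set_integral_Edens_neg_eq_ipK_Eres:
  assumes q: "0 < q" and f: "inK q f" and g: "inK q g" and t: "- 1/2 \<le> t" "t < 0"
  shows "(LINT x:{- 1/2..t}|lborel. Edens q f g x) = ipK q f (Eres q t g)"
proof -
  define a where "a = ln (- 2 * t) / q"
  have "a \<le> 0"
    unfolding a_def using q t by (auto intro!: divide_nonpos_pos)
  have S: "{- t..1/2} \<in> sets borel" "{- t..1/2} \<subseteq> {0<..1/2}"
    using t by auto
  have T: "{y. exp (q * y) / 2 \<in> {- t..1/2}} = {a..0}"
    using exp_preimage_atLeastAtMost[OF q, of "- t" "1/2"] t by (simp add: a_def)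
  have "(LINT x:{- 1/2..t}|lborel. Edens q f g x)
      = (LINT x:uminus ` {- t..1/2}|lborel. Edens q f g x)"
    by simp
  also have "\<dots> = (LINT y:{a..0}|lborel. ipK_dens2 q f g y)
                   + (LINT y:{0..- a}|lborel. ipK_dens2 q f g y)"
    using set_integral_Edens_neg(2)[OF q f g S, unfolded T] by simp
  also have "\<dots> = (LINT y:{a..- a}|lborel. ipK_dens2 q f g y)"
    using \<open>a \<le> 0\<close>
    by (intro set_integral_Icc_add integrable_imp_set_integrable integrable_ipK_dens[OF q f g]) auto
  also have "\<dots> = (LINT y:{a<..- a}|lborel. ipK_dens2 q f g y)"
    by (rule set_integral_cong_finite[of "{a}"]) auto
  also have "\<dots> = ipK q f (Eres q t g)"
    using ipK_Eres_neg[OF q t] by (simp add: a_def)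
  finally show ?thesis .
qed

lemma set_integral_Edens_zero_eq_ipK_Eres:
  assumes q: "0 < q" and f: "inK q f" and g: "inK q g"
  shows "(LINT x:{- 1/2..0}|lborel. Edens q f g x) = ipK q f (Eres q 0 g)"
proof -
  have S: "{0<..1/2::real} \<in> sets borel" "{0<..1/2} \<subseteq> {0<..1/2::real}"
    by auto
  have T: "{y. exp (q * y) / 2 \<in> {0<..1/2}} = {..0}"
    using exp_preimage_greaterThanAtMost[OF q, of "1/2"] by simp
  have "(LINT x:{- 1/2..0}|lborel. Edens q f g x)
      = (LINT x:uminus ` {0<..1/2}|lborel. Edens q f g x)"
    by (rule set_integral_cong_finite[of "{0}"]) auto
  also have "\<dots> = (LINT y:{..0}|lborel. ipK_dens2 q f g y)
                   + (LINT y:{0..}|lborel. ipK_dens2 q f g y)"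
    using set_integral_Edens_neg(2)[OF q f g S, unfolded T] by simp
  also have "(LINT y:{..0}|lborel. ipK_dens2 q f g y) = (LINT y:{..<0}|lborel. ipK_dens2 q f g y)"
    by (rule set_integral_cong_finite[of "{0}"]) auto
  also have "\<dots> + (LINT y:{0..}|lborel. ipK_dens2 q f g y)
               = (LINT y:{..<0} \<union> {0..}|lborel. ipK_dens2 q f g y)"
    by (intro set_integral_Un[symmetric] integrable_imp_set_integrable integrable_ipK_dens[OF q f g])
       auto
  also have "{..<0::real} \<union> {0..} = UNIV"
    by auto
  also have "(LINT y:UNIV|lborel. ipK_dens2 q f g y) = ipK q f (Eres q 0 g)"
    by (simp add: ipK_Eres_zero set_lebesgue_integral_def)
  finally show ?thesis .
qed

lemma set_integral_Edens_pos_eq_ipK_Eres: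
  assumes q: "0 < q" and f: "inK q f" and g: "inK q g" and t: "0 < t" "t \<le> 1/2"
  shows "(LINT x:{- 1/2..t}|lborel. Edens q f g x) = ipK q f (Eres q t g)"
proof -
  define a where "a = ln (2 * t) / q"
  have S: "{0<..t} \<in> sets borel" "{0<..t} \<subseteq> {0<..1/2}"
    using t by auto
  have T: "{y. exp (q * y) / 2 \<in> {0<..t}} = {..a}"
    using exp_preimage_greaterThanAtMost[OF q t(1)] by (simp add: a_def)
  have "(LINT x:{- 1/2..t}|lborel. Edens q f g x)
      = (LINT x:{- 1/2..0}|lborel. Edens q f g x) + (LINT x:{0..t}|lborel. Edens q f g x)"
    using t set_integrable_Edens[OF q f g]
    by (intro set_integral_Icc_add[symmetric]) (auto elim: set_integrable_subset)
  also have "(LINT x:{0..t}|lborel. Edens q f g x) = (LINT x:{0<..t}|lborel. Edens q f g x)"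
    by (rule set_integral_cong_finite[of "{0}"]) auto
  also have "\<dots> = (LINT y:{..a}|lborel. ipK_dens1 q f g y)
                   + (LINT y:{- a..}|lborel. ipK_dens1 q f g y)"
    using set_integral_Edens_pos(2)[OF q f g S, unfolded T] by simp
  also have "(LINT y:{- a..}|lborel. ipK_dens1 q f g y)
               = (LINT y:{- a<..}|lborel. ipK_dens1 q f g y)"
    by (rule set_integral_cong_finite[of "{- a}"]) auto
  finally show ?thesis
    using set_integral_Edens_zero_eq_ipK_Eres[OF q f g] ipK_Eres_pos[OF q f g t]
    by (simp add: ipK_Eres_zero a_def add_ac)
qed

theorem lemma4p5:
  fixes R r :: real and f g :: dpair
  assumes "R > 0" and "r > 0"
    and "inK (q1 R r) f" and "inK (q1 R r) g"
  shows "set_integrable lborel {-1/2..1/2::real} (Edens (q1 R r) f g) \<and>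
         (\<forall>s t. -1/2 \<le> s \<and> s \<le> t \<and> t \<le> 1/2 \<longrightarrow>
            ipK (q1 R r) f (Eres (q1 R r) t g) - ipK (q1 R r) f (Eres (q1 R r) s g)
              = (LINT x:{s..t}|lborel. Edens (q1 R r) f g x))"
proof -
  have q: "0 < q1 R r"
    unfolding q1_def using assms(1,2) by (intro add_pos_pos) auto
  note int = set_integrable_Edens[OF q assms(3,4)]
  have ipK_Eres:
    "ipK (q1 R r) f (Eres (q1 R r) t g) = (LINT x:{- 1/2..t}|lborel. Edens (q1 R r) f g x)"
    if "- 1/2 \<le> t" "t \<le> 1/2" for t
    using that set_integral_Edens_neg_eq_ipK_Eres[OF q assms(3,4)]
      set_integral_Edens_zero_eq_ipK_Eres[OF q assms(3,4)]
      set_integral_Edens_pos_eq_ipK_Eres[OF q assms(3,4)]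
    by (cases t "0::real" rule: linorder_cases) auto
  have "ipK (q1 R r) f (Eres (q1 R r) t g) - ipK (q1 R r) f (Eres (q1 R r) s g)
          = (LINT x:{s..t}|lborel. Edens (q1 R r) f g x)"
    if "- 1/2 \<le> s" "s \<le> t" "t \<le> 1/2" for s t
    using that ipK_Eres set_integral_Icc_add[OF set_integrable_subset[OF int], of "- 1/2" t s]
    by (simp add: algebra_simps)
  with int show ?thesis
    by auto
qed

end
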